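(* In the setting below, for each $n\in\mathbb{N}_0$ and $i,j=1,\dots,N$, $$|x_i(s)-x_j(t)|\le d(t_{2n+2})\quad\forall s,t\in[t_{2n+1},t_{2n+2}].$$
   Context: Setting: $N\ge2$; $\psi:\mathbb{R}^d\times\mathbb{R}^d\to\mathbb{R}$ positive, bounded, continuous, $K:=\|\psi\|_\infty$; $\{t_n\}_{n\in\mathbb{N}_0}$ increasing, nonnegative, $t_0=0$, $t_n\to\infty$; $\alpha(0)=1$, $\alpha=1$ on $(t_{2n},t_{2n+1})$, $\alpha=-1$ on $[t_{2n+1},t_{2n+2}]$; $\{x_i\}$ solves $x_i'(t)=\frac1{N-1}\sum_{j\ne i}\alpha(t)\psi(x_i(t),x_j(t))(x_j(t)-x_i(t))$, $t>0$, $x_i(0)=x_i^0\in\mathbb{R}^d$ (continuous, $C^1$ on each $(t_n,t_{n+1})$). $d(t):=\max_{i,j}|x_i(t)-x_j(t)|$. Standing assumptions: $t_{2n+2}-t_{2n+1}<\frac{\ln 2}{K}$ for all $n$; $\sum_{p\ge0}\ln\frac{e^{K(t_{2p+2}-t_{2p+1})}}{2-e^{K(t_{2p+2}-t_{2p+1})}}<\infty$; $\sum_{p\ge0}\ln\max\{1-e^{-K(t_{2p+1}-t_{2p})},1-\frac{\psi_0}{K}(1-e^{-K(t_{2p+1}-t_{2p})})\}=-\infty$, with $\psi_0=\min_{|y|,|z|\le M^0}\psi(y,z)$, $M^0=e^{K\sum_{p}(t_{2p+2}-t_{2p+1})}\max_i|x_i^0|$. *)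

theory Defs
  imports "HOL-Analysis.Analysis"
begin

definition diam :: "nat \<Rightarrow> (nat \<Rightarrow> real \<Rightarrow> 'a::real_normed_vector) \<Rightarrow> real \<Rightarrow> real" where
  "diam N x tau = Max {norm (x i tau - x j tau) | i j. i < N \<and> j < N}"

end

theory Submission
  imports Defs
begin

text \<open>During a repulsive phase (\<open>alpha = -1\<close>) the agent with the largest projection onto a
direction \<open>v\<close> is pushed further in direction \<open>v\<close>, so \<open>max\<^sub>k v \<bullet> x k s\<close> is nondecreasing in \<open>s\<close>
on \<open>[t (2n+1), t (2n+2)]\<close>. Hence every \<open>x i s\<close> lies in every half-space containing the final
positions, and two such points are no farther apart than the final diameter: test with the
direction \<open>v = x i s - x j s'\<close>. Only the positivity of \<open>psi\<close> and the sign of \<open>alpha\<close> enter.\<close>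

text \<open>The barrier \<open>e (1 + b - s)\<close> makes the derivative of the current leader strictly larger than
that of the barrier, so the last contact point of the barrier could be pushed to the right.\<close>
lemma finite_max_below_barrier:
  fixes g :: "'i \<Rightarrow> real \<Rightarrow> real"
  assumes I: "finite I"
    and cont: "\<And>k. k \<in> I \<Longrightarrow> continuous_on {s0..b} (g k)"
    and leader_deriv: "\<And>s k. s0 \<le> s \<Longrightarrow> s < b \<Longrightarrow> k \<in> I \<Longrightarrow> (\<forall>j\<in>I. g j s \<le> g k s) \<Longrightarrow>
        \<exists>D\<ge>0. (g k has_real_derivative D) (at s)"
    and final: "\<And>k. k \<in> I \<Longrightarrow> g k b \<le> c"
    and e: "e > 0" and k: "k \<in> I" and s0: "s0 \<le> b"
  shows "g k s0 < c + e * (1 + b - s0)"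
proof (rule ccontr)
  assume contact: "\<not> ?thesis"
  define S where "S = (\<Union>k\<in>I. {s0..b} \<inter> (\<lambda>s. g k s - c - e * (1 + b - s)) -` {0..})"
  have "closed S"
    unfolding S_def using cont I by (intro closed_UN ballI continuous_closed_preimage continuous_intros) auto
  moreover have "bounded S"
    unfolding S_def by (rule bounded_subset[of "{s0..b}"]) auto
  moreover have "s0 \<in> S"
    using contact s0 k unfolding S_def by (auto intro!: bexI[of _ k])
  ultimately obtain ss where "ss \<in> S" and ss_last: "\<forall>s\<in>S. s \<le> ss"
    using compact_attains_sup[of S] compact_eq_bounded_closed by blast
  then obtain k0 where k0: "k0 \<in> I" and ss: "ss \<in> {s0..b}" "g k0 ss \<ge> c + e * (1 + b - ss)"
    unfolding S_def by auto
  have "Max ((\<lambda>j. g j ss) ` I) \<in> (\<lambda>j. g j ss) ` I"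
    using I k0 by (intro Max_in) auto
  then obtain k1 where k1: "k1 \<in> I" "g k1 ss = Max ((\<lambda>j. g j ss) ` I)"
    by auto
  have leader: "\<forall>j\<in>I. g j ss \<le> g k1 ss"
    using k1 I by auto
  have k1_contact: "g k1 ss \<ge> c + e * (1 + b - ss)"
    using leader k0 ss by force
  have "ss < b"
    using k1_contact final[OF k1(1)] e ss by (cases "ss = b") auto
  then obtain D where "D \<ge> 0" and D: "(g k1 has_real_derivative D) (at ss)"
    using leader_deriv[OF _ _ k1(1) leader] ss by auto
  have "((\<lambda>s. g k1 s - c - e * (1 + b - s)) has_real_derivative D + e) (at ss)"
    using D by (auto intro!: derivative_eq_intros)
  from DERIV_pos_inc_right[OF this] obtain d where "d > 0" and increasing:
      "\<And>h. 0 < h \<Longrightarrow> h < d \<Longrightarrow> g k1 ss - c - e * (1 + b - ss) < g k1 (ss + h) - c - e * (1 + b - (ss + h))"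
    using \<open>D \<ge> 0\<close> e by auto
  define h where "h = min (d / 2) ((b - ss) / 2)"
  have h: "0 < h" "h < d" "ss + h \<le> b"
    using \<open>d > 0\<close> \<open>ss < b\<close> unfolding h_def by (auto simp: min_def field_simps)
  have "ss + h \<in> S"
    using increasing[OF h(1,2)] k1_contact h ss k1(1) unfolding S_def by force
  then show False
    using ss_last h by force
qed

lemma finite_max_le_final:
  fixes g :: "'i \<Rightarrow> real \<Rightarrow> real"
  assumes I: "finite I" and ab: "a < b"
    and cont: "\<And>k. k \<in> I \<Longrightarrow> continuous_on {a..b} (g k)"
    and leader_deriv: "\<And>s k. a < s \<Longrightarrow> s < b \<Longrightarrow> k \<in> I \<Longrightarrow> (\<forall>j\<in>I. g j s \<le> g k s) \<Longrightarrow>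
        \<exists>D\<ge>0. (g k has_real_derivative D) (at s)"
    and final: "\<And>k. k \<in> I \<Longrightarrow> g k b \<le> c"
    and k: "k \<in> I" and s: "s \<in> {a..b}"
  shows "g k s \<le> c"
proof -
  have interior: "g k s \<le> c" if "a < s" "s \<le> b" for s
  proof (rule field_le_epsilon)
    fix e :: real
    assume "e > 0"
    have "g k s < c + e / (1 + b - s) * (1 + b - s)"
    proof (rule finite_max_below_barrier[where I = I and g = g])
      show "continuous_on {s..b} (g j)" if "j \<in> I" for j
        using continuous_on_subset[OF cont[OF that]] \<open>a < s\<close> by simp
      show "\<exists>D\<ge>0. (g j has_real_derivative D) (at s')"
        if "s \<le> s'" "s' < b" "j \<in> I" "\<forall>i\<in>I. g i s' \<le> g j s'" for s' j
        using leader_deriv that \<open>a < s\<close> by simp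
    qed (use I final \<open>e > 0\<close> \<open>s \<le> b\<close> k in auto)
    then show "g k s \<le> c + e"
      using that by simp
  qed
  show ?thesis
  proof (cases "a < s")
    case True
    then show ?thesis using interior s by auto
  next
    case False
    then have "s = a" using s by auto
    have "(g k \<longlongrightarrow> g k a) (at_right a)"
      using continuous_on_Icc_at_rightD[OF cont[OF k] ab] .
    moreover have "\<forall>\<^sub>F s in at_right a. g k s \<le> c"
      unfolding eventually_at_right_field using ab interior by (intro exI[of _ b]) auto
    ultimately show ?thesis
      using \<open>s = a\<close> by (auto intro: tendsto_upperbound)
  qed
qed

lemma repulsive_leader_projection_deriv_nonneg:
  fixes y :: "real \<Rightarrow> 'a::real_inner"
  assumes y': "(y has_vector_derivative c *\<^sub>R (\<Sum>j\<in>J. w j *\<^sub>R (z j - y s))) (at s)"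
    and "c \<ge> 0"
    and repulsive: "\<And>j. j \<in> J \<Longrightarrow> w j \<le> 0"
    and leader: "\<And>j. j \<in> J \<Longrightarrow> v \<bullet> z j \<le> v \<bullet> y s"
  shows "\<exists>D\<ge>0. ((\<lambda>s. v \<bullet> y s) has_real_derivative D) (at s)"
proof (intro exI conjI)
  show "((\<lambda>s. v \<bullet> y s) has_real_derivative c * (\<Sum>j\<in>J. w j * (v \<bullet> z j - v \<bullet> y s))) (at s)"
    using bounded_linear.has_vector_derivative[OF bounded_linear_inner_right y', of v]
    by (simp add: has_real_derivative_iff_has_vector_derivative inner_sum_right inner_diff_right)
  show "0 \<le> c * (\<Sum>j\<in>J. w j * (v \<bullet> z j - v \<bullet> y s))"
    using \<open>c \<ge> 0\<close> repulsive leader by (intro mult_nonneg_nonneg sum_nonneg mult_nonpos_nonpos) auto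
qed

lemma repulsive_projection_le_final:
  fixes x :: "'i \<Rightarrow> real \<Rightarrow> 'a::real_inner"
  assumes I: "finite I" and ab: "a < b"
    and cont: "\<And>k. k \<in> I \<Longrightarrow> continuous_on {a..b} (x k)"
    and ode: "\<And>k s. k \<in> I \<Longrightarrow> a < s \<Longrightarrow> s < b \<Longrightarrow>
        (x k has_vector_derivative c *\<^sub>R (\<Sum>j\<in>I - {k}. w k j s *\<^sub>R (x j s - x k s))) (at s)"
    and "c \<ge> 0"
    and repulsive: "\<And>k j s. k \<in> I \<Longrightarrow> j \<in> I \<Longrightarrow> a < s \<Longrightarrow> s < b \<Longrightarrow> w k j s \<le> 0"
    and k: "k \<in> I" and s: "s \<in> {a..b}"
  shows "\<exists>p\<in>I. v \<bullet> x k s \<le> v \<bullet> x p b"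
proof -
  have "Max ((\<lambda>p. v \<bullet> x p b) ` I) \<in> (\<lambda>p. v \<bullet> x p b) ` I"
    using I k by (intro Max_in) auto
  then obtain p where p: "p \<in> I" "v \<bullet> x p b = Max ((\<lambda>p. v \<bullet> x p b) ` I)"
    by auto
  have "v \<bullet> x k s \<le> v \<bullet> x p b"
  proof (rule finite_max_le_final[OF I ab _ _ _ k s])
    show "continuous_on {a..b} (\<lambda>s. v \<bullet> x k s)" if "k \<in> I" for k
      using cont[OF that] by (intro continuous_intros)
    show "v \<bullet> x j b \<le> v \<bullet> x p b" if "j \<in> I" for j
      using p I that by auto
    show "\<exists>D\<ge>0. ((\<lambda>s. v \<bullet> x k s) has_real_derivative D) (at s)"
      if "a < s" "s < b" "k \<in> I" "\<forall>j\<in>I. v \<bullet> x j s \<le> v \<bullet> x k s" for s k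
      using that by (intro repulsive_leader_projection_deriv_nonneg[OF ode \<open>c \<ge> 0\<close>] repulsive) auto
  qed
  then show ?thesis
    using p by blast
qed

lemma norm_diff_le_if_projections_dominated:
  fixes y y' :: "'a::real_inner"
  assumes y: "\<And>v. \<exists>z\<in>Z. v \<bullet> y \<le> v \<bullet> z" and y': "\<And>v. \<exists>z\<in>Z. v \<bullet> y' \<le> v \<bullet> z"
    and diam: "\<And>z z'. z \<in> Z \<Longrightarrow> z' \<in> Z \<Longrightarrow> norm (z - z') \<le> D"
  shows "norm (y - y') \<le> D"
proof -
  define u where "u = y - y'"
  obtain z where z: "z \<in> Z" "u \<bullet> y \<le> u \<bullet> z"
    using y by blast
  obtain z' where z': "z' \<in> Z" "(- u) \<bullet> y' \<le> (- u) \<bullet> z'"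
    using y' by blast
  have "norm u * norm u = u \<bullet> u"
    by (metis power2_eq_square power2_norm_eq_inner)
  also have "\<dots> = u \<bullet> y - u \<bullet> y'"
    by (simp add: u_def inner_diff_right)
  also have "\<dots> \<le> u \<bullet> (z - z')"
    using z z' by (simp add: inner_diff_right)
  also have "\<dots> \<le> norm u * norm (z - z')"
    by (rule norm_cauchy_schwarz)
  also have "\<dots> \<le> norm u * D"
    using diam[OF z(1) z'(1)] by (simp add: mult_left_mono)
  finally have "norm u * norm u \<le> norm u * D" .
  moreover have "0 \<le> D"
    using diam[OF z(1) z(1)] by simp
  ultimately show ?thesis
    unfolding u_def by (metis mult_le_cancel_left_pos norm_ge_zero order_le_less)
qed

lemma norm_le_diam:
  assumes "i < N" "j < N"
  shows "norm (x i \<tau> - x j \<tau>) \<le> diam N x \<tau>"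
  unfolding diam_def using assms by (intro Max_ge) (auto simp: finite_image_set2)

lemma norm_le_diam_if_projections_dominated:
  fixes x :: "nat \<Rightarrow> real \<Rightarrow> 'a::real_inner"
  assumes "\<And>v. \<exists>p\<in>{..<N}. v \<bullet> y \<le> v \<bullet> x p \<tau>" and "\<And>v. \<exists>p\<in>{..<N}. v \<bullet> y' \<le> v \<bullet> x p \<tau>"
  shows "norm (y - y') \<le> diam N x \<tau>"
proof (rule norm_diff_le_if_projections_dominated[where Z = "(\<lambda>p. x p \<tau>) ` {..<N}"])
  show "\<exists>z\<in>(\<lambda>p. x p \<tau>) ` {..<N}. v \<bullet> y \<le> v \<bullet> z" "\<exists>z\<in>(\<lambda>p. x p \<tau>) ` {..<N}. v \<bullet> y' \<le> v \<bullet> z" for v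
    using assms(1)[of v] assms(2)[of v] by auto
  show "norm (z - z') \<le> diam N x \<tau>" if "z \<in> (\<lambda>p. x p \<tau>) ` {..<N}" "z' \<in> (\<lambda>p. x p \<tau>) ` {..<N}" for z z'
    using that by (auto intro: norm_le_diam)
qed

theorem lemma3p5:
  fixes N :: nat
    and psi :: "'a::euclidean_space \<Rightarrow> 'a \<Rightarrow> real"
    and K psi0 M0 :: real
    and t :: "nat \<Rightarrow> real"
    and alpha :: "real \<Rightarrow> real"
    and x :: "nat \<Rightarrow> real \<Rightarrow> 'a"
  assumes N2: "N \<ge> 2"
    and psi_pos: "\<And>y z. psi y z > 0"
    and psi_bdd: "bounded (range (\<lambda>(y, z). psi y z))"
    and psi_cont: "continuous_on UNIV (\<lambda>(y, z). psi y z)"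
    and K_def: "K = (SUP p. \<bar>psi (fst p) (snd p)\<bar>)"
    and t_mono: "strict_mono t"
    and t0: "t 0 = 0"
    and t_lim: "filterlim t at_top sequentially"
    and alpha0: "alpha 0 = 1"
    and alpha_pos: "\<And>n s. t (2*n) < s \<Longrightarrow> s < t (2*n+1) \<Longrightarrow> alpha s = 1"
    and alpha_neg: "\<And>n s. t (2*n+1) \<le> s \<Longrightarrow> s \<le> t (2*n+2) \<Longrightarrow> alpha s = -1"
    and x_cont: "\<And>i. i < N \<Longrightarrow> continuous_on {0..} (x i)"
    and x_ode: "\<And>i n s. i < N \<Longrightarrow> t n < s \<Longrightarrow> s < t (Suc n) \<Longrightarrow>
        (x i has_vector_derivative
           (1 / (real N - 1)) *\<^sub>R
             (\<Sum>j\<in>{..<N} - {i}. (alpha s * psi (x i s) (x j s)) *\<^sub>R (x j s - x i s)))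
        (at s)"
    and short_neg: "\<And>n. t (2*n+2) - t (2*n+1) < ln 2 / K"
    and sum_neg: "summable (\<lambda>p. ln (exp (K * (t (2*p+2) - t (2*p+1)))
                                   / (2 - exp (K * (t (2*p+2) - t (2*p+1))))))"
    and M0_def: "M0 = exp (K * (\<Sum>p. t (2*p+2) - t (2*p+1))) * (MAX i\<in>{..<N}. norm (x i 0))"
    and psi0_def: "psi0 = (INF p\<in>{(y, z). norm y \<le> M0 \<and> norm z \<le> M0}. psi (fst p) (snd p))"
    and sum_pos: "filterlim (\<lambda>m. \<Sum>p<m. ln (max (1 - exp (- K * (t (2*p+1) - t (2*p))))
                     (1 - psi0 / K * (1 - exp (- K * (t (2*p+1) - t (2*p)))))))
                   at_bot sequentially"
  shows "\<forall>n i j. i < N \<longrightarrow> j < N \<longrightarrow>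
           (\<forall>s\<in>{t (2*n+1)..t (2*n+2)}. \<forall>s'\<in>{t (2*n+1)..t (2*n+2)}.
              norm (x i s - x j s') \<le> diam N x (t (2*n+2)))"
proof (intro allI impI ballI)
  fix n i j s s'
  assume i: "i < N" and j: "j < N"
    and s: "s \<in> {t (2*n+1)..t (2*n+2)}" and s': "s' \<in> {t (2*n+1)..t (2*n+2)}"
  have phase: "t (2*n+1) < t (2*n+2)" "0 < t (2*n+1)"
    using strict_monoD[OF t_mono, of "2*n+1" "2*n+2"] strict_monoD[OF t_mono, of 0 "2*n+1"] t0 by auto
  have projections: "\<exists>p\<in>{..<N}. v \<bullet> x k \<sigma> \<le> v \<bullet> x p (t (2*n+2))"
    if "k < N" "\<sigma> \<in> {t (2*n+1)..t (2*n+2)}" for k \<sigma> v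
  proof (rule repulsive_projection_le_final[where c = "1 / (real N - 1)"
        and w = "\<lambda>k j s. alpha s * psi (x k s) (x j s)"])
    show "continuous_on {t (2*n+1)..t (2*n+2)} (x k)" if "k \<in> {..<N}" for k
      using that phase by (auto intro!: continuous_on_subset[OF x_cont[of k]])
    show "(x k has_vector_derivative (1 / (real N - 1)) *\<^sub>R
        (\<Sum>j\<in>{..<N} - {k}. (alpha s * psi (x k s) (x j s)) *\<^sub>R (x j s - x k s))) (at s)"
      if "k \<in> {..<N}" "t (2*n+1) < s" "s < t (2*n+2)" for k s
      using x_ode[of k "2*n+1" s] that by simp
    show "alpha s * psi (x k s) (x j s) \<le> 0" if "t (2*n+1) < s" "s < t (2*n+2)" for k j s
      using alpha_neg[of n s] psi_pos[of "x k s" "x j s"] that by simp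
  qed (use that phase N2 in auto)
  show "norm (x i s - x j s') \<le> diam N x (t (2*n+2))"
    using projections[OF i s] projections[OF j s'] by (rule norm_le_diam_if_projections_dominated)
qed

end
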